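(* Let $p$ be a binary word of length $l$ with exactly $2$ runs. For every $n\ge l$, every $p$-optimal binary word of length $n$ has exactly $2$ runs.
   Context: $c_p(w)$ is the number of occurrences of $p$ as a (not necessarily consecutive) subsequence of $w$. $M_{n,p}=\max\{c_p(w): w\in\{0,1\}^n\}$; a binary word $w$ of length $n$ is $p$-optimal if $c_p(w)=M_{n,p}$. A run is a maximal block of consecutive equal letters. *)

theory Defs
  imports Main
begin

text \<open>Binary words are lists of booleans (letter 0 = False, letter 1 = True).\<close>

definition occ :: "bool list \<Rightarrow> bool list \<Rightarrow> nat" where
  "occ p w = card {is. length is = length p \<and> sorted_wrt (<) is \<and>
                      (\<forall>j<length p. is ! j < length w \<and> w ! (is ! j) = p ! j)}"

definition maxocc :: "nat \<Rightarrow> bool list \<Rightarrow> nat" where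
  "maxocc n p = Max ((occ p) ` {w. length w = n})"

definition optimal :: "bool list \<Rightarrow> bool list \<Rightarrow> bool" where
  "optimal p w \<longleftrightarrow> occ p w = maxocc (length w) p"

definition runs :: "bool list \<Rightarrow> nat" where
  "runs w = length (remdups_adj w)"

end

theory Submission
  imports Defs
begin

text \<open>A word with two runs is \<open>p = x\<^sup>a (\<not>x)\<^sup>b\<close>. If \<open>w\<close> has \<open>m\<close> letters \<open>x\<close> and \<open>k\<close> letters \<open>\<not>x\<close>,
  sending an occurrence of \<open>p\<close> in \<open>w\<close> to the pair (set of its first \<open>a\<close> positions, set of its
  last \<open>b\<close> positions) is injective, so \<open>c\<^sub>p(w) \<le> C(m,a) C(k,b)\<close>. The sorted word
  \<open>x\<^sup>m (\<not>x)\<^sup>k\<close> attains this bound, while it is strict if some \<open>\<not>x\<close> precedes some \<open>x\<close> in \<open>w\<close>: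
  no occurrence is sent to a pair containing that later \<open>x\<close> and that earlier \<open>\<not>x\<close>. Hence an
  optimal word is sorted, and it contains both letters since it contains an occurrence of \<open>p\<close>.\<close>

definition block_word :: "nat \<Rightarrow> nat \<Rightarrow> bool \<Rightarrow> bool list" where
  "block_word a b x = replicate a x @ replicate b (\<not>x)"

lemma length_block_word [simp]: "length (block_word a b x) = a + b"
  by (simp add: block_word_def)

lemma nth_block_word: "j < a + b \<Longrightarrow> block_word a b x ! j = (if j < a then x else \<not>x)"
  by (simp add: block_word_def nth_append)

lemma runs_block_word:
  assumes "a \<ge> 1" "b \<ge> 1"
  shows "runs (block_word a b x) = 2"
proof -
  obtain a' where a: "a = Suc a'" using assms by (cases a) auto
  obtain b' where b: "b = Suc b'" using assms by (cases b) auto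
  have drop_x: "dropWhile (\<lambda>y. y = x) (replicate a' x @ replicate b (\<not>x)) = replicate b (\<not>x)"
    by (induction a') (auto simp: b)
  have "remdups_adj (block_word a b x) = [x, \<not>x]"
    unfolding block_word_def a replicate_Suc append_Cons remdups_adj_Cons' drop_x
    using assms by (simp add: remdups_adj_replicate)
  then show ?thesis by (simp add: runs_def)
qed

lemma runs_eq_2_imp_block_word:
  assumes "runs w = 2"
  shows "\<exists>x a b. a \<ge> 1 \<and> b \<ge> 1 \<and> w = block_word a b x"
  using assms
proof (induction w)
  case Nil
  then show ?case by (simp add: runs_def)
next
  case (Cons c w)
  then obtain d w' where w: "w = d # w'" by (cases w) (auto simp: runs_def)
  show ?case
  proof (cases "d = c")
    case True
    then have "runs w = 2" using Cons.prems by (simp add: runs_def w)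
    then obtain x a b where ab: "a \<ge> 1" "b \<ge> 1" "w = block_word a b x"
      using Cons.IH by blast
    then have "x = c" using w True by (cases a) (auto simp: block_word_def)
    with ab show ?thesis
      by (intro exI[of _ x] exI[of _ "Suc a"] exI[of _ b]) (auto simp: block_word_def)
  next
    case False
    then have "length (remdups_adj w) = 1" using Cons.prems by (simp add: runs_def w)
    then have "w = replicate (length w) d"
      using remdups_adj_singleton_iff w by (metis One_nat_def list.sel(1))
    then show ?thesis using False
      by (intro exI[of _ c] exI[of _ 1] exI[of _ "length w"]) (auto simp: w block_word_def)
  qed
qed

lemma no_inversion_imp_block_word:
  assumes "\<And>i j. i < j \<Longrightarrow> j < length w \<Longrightarrow> w ! i = (\<not>x) \<Longrightarrow> w ! j = x \<Longrightarrow> False"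
  shows "\<exists>a b. w = block_word a b x"
  using assms
proof (induction w)
  case Nil
  then show ?case by (auto simp: block_word_def)
next
  case (Cons c w)
  have "\<exists>a b. w = block_word a b x"
    by (rule Cons.IH) (use Cons.prems[of "Suc _" "Suc _"] in auto)
  then obtain a b where w: "w = block_word a b x" by blast
  show ?case
  proof (cases "c = x")
    case True
    then show ?thesis using w by (intro exI[of _ "Suc a"] exI[of _ b]) (simp add: block_word_def)
  next
    case False
    have "\<forall>d \<in> set w. d = (\<not>x)"
    proof
      fix d assume "d \<in> set w"
      then obtain j where "j < length w" "d = w ! j" by (auto simp: in_set_conv_nth)
      then show "d = (\<not>x)" using Cons.prems[of 0 "Suc j"] False by auto
    qed
    then have "c # w = replicate (Suc (length w)) (\<not>x)"
      using False by (simp add: replicate_length_same)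
    then show ?thesis by (intro exI[of _ 0] exI[of _ "Suc (length w)"]) (simp add: block_word_def)
  qed
qed

definition occurrences :: "bool list \<Rightarrow> bool list \<Rightarrow> nat list set" where
  "occurrences p w = {ks. length ks = length p \<and> sorted_wrt (<) ks \<and>
                          (\<forall>j<length p. ks ! j < length w \<and> w ! (ks ! j) = p ! j)}"

lemma occ_eq_card_occurrences: "occ p w = card (occurrences p w)"
  by (simp add: occ_def occurrences_def)

lemma finite_occurrences: "finite (occurrences p w)"
proof (rule finite_subset)
  show "occurrences p w \<subseteq> {ks. set ks \<subseteq> {..<length w} \<and> length ks = length p}"
    by (auto simp: occurrences_def in_set_conv_nth)
  show "finite {ks. set ks \<subseteq> {..<length w} \<and> length ks = length p}"
    by (rule finite_lists_length_eq) simp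
qed

lemma occ_self_append_pos: "occ p (p @ u) > 0"
proof -
  have "[0..<length p] \<in> occurrences p (p @ u)"
    by (auto simp: occurrences_def nth_append sorted_wrt_iff_nth_less)
  then show ?thesis
    using finite_occurrences card_gt_0_iff by (metis empty_iff occ_eq_card_occurrences)
qed

lemma optimal_occ_ge:
  assumes "optimal p w" "length v = length w"
  shows "occ p v \<le> occ p w"
proof -
  have "finite {u :: bool list. length u = length w}"
    using finite_lists_length_eq[of "UNIV :: bool set"] by simp
  then show ?thesis
    using assms by (auto simp: optimal_def maxocc_def intro!: Max_ge)
qed

lemma optimal_occ_pos:
  assumes "optimal p w" "length p \<le> length w"
  shows "occ p w > 0"
  using occ_self_append_pos[of p "replicate (length w - length p) False"]
    optimal_occ_ge[OF assms(1)] assms(2) by (simp add: less_le_trans)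

definition positions :: "bool list \<Rightarrow> bool \<Rightarrow> nat set" where
  "positions w x = {i. i < length w \<and> w ! i = x}"

lemma finite_positions [simp]: "finite (positions w x)"
  by (simp add: positions_def)

lemma positions_block_word_fst: "positions (block_word a b x) x = {..<a}"
  by (cases x) (auto simp: positions_def nth_block_word split: if_splits)

lemma positions_block_word_snd: "positions (block_word a b x) (\<not>x) = {a..<a+b}"
  by (cases x) (auto simp: positions_def nth_block_word split: if_splits)

definition subset_pairs :: "nat \<Rightarrow> nat \<Rightarrow> bool \<Rightarrow> bool list \<Rightarrow> (nat set \<times> nat set) set" where
  "subset_pairs a b x w =
     {A. A \<subseteq> positions w x \<and> card A = a} \<times> {B. B \<subseteq> positions w (\<not>x) \<and> card B = b}"

lemma card_subset_pairs:
  "card (subset_pairs a b x w) = (card (positions w x) choose a) * (card (positions w (\<not>x)) choose b)"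
  by (simp add: subset_pairs_def card_cartesian_product n_subsets)

lemma finite_subset_pairs: "finite (subset_pairs a b x w)"
  unfolding subset_pairs_def
  by (intro finite_cartesian_product; rule finite_subset[of _ "Pow (positions _ _)"]) auto

definition split_occurrence :: "nat \<Rightarrow> nat list \<Rightarrow> nat set \<times> nat set" where
  "split_occurrence a ks = (set (take a ks), set (drop a ks))"

lemma inj_on_split_occurrence: "inj_on (split_occurrence a) (occurrences p w)"
proof (rule inj_onI)
  fix ks ls assume "ks \<in> occurrences p w" "ls \<in> occurrences p w"
    and eq: "split_occurrence a ks = split_occurrence a ls"
  then have "sorted_wrt (<) ks" "sorted_wrt (<) ls" by (auto simp: occurrences_def)
  then have "take a ks = take a ls \<and> drop a ks = drop a ls"
    using eq by (auto simp: split_occurrence_def strict_sorted_iff sorted_wrt_take sorted_wrt_drop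
        intro: sorted_distinct_set_unique)
  then show "ks = ls" by (metis append_take_drop_id)
qed

lemma split_occurrence_in_subset_pairs:
  assumes "ks \<in> occurrences (block_word a b x) w"
  shows "split_occurrence a ks \<in> subset_pairs a b x w"
proof -
  have len: "length ks = a + b" and sorted: "sorted_wrt (<) ks"
    and letters: "\<And>j. j < a + b \<Longrightarrow> ks ! j < length w \<and> w ! (ks ! j) = block_word a b x ! j"
    using assms by (auto simp: occurrences_def)
  have "set (take a ks) \<subseteq> positions w x"
    using letters len by (auto simp: in_set_conv_nth positions_def nth_block_word)
  moreover have "set (drop a ks) \<subseteq> positions w (\<not>x)"
    using letters[of "a + _"] len by (auto simp: in_set_conv_nth positions_def nth_block_word)
  moreover have "distinct ks" using sorted strict_sorted_iff by blast
  ultimately show ?thesis using len by (simp add: split_occurrence_def subset_pairs_def distinct_card)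
qed

lemma occ_block_word_le:
  "occ (block_word a b x) w \<le> (card (positions w x) choose a) * (card (positions w (\<not>x)) choose b)"
  unfolding occ_eq_card_occurrences card_subset_pairs[symmetric]
  by (rule card_inj_on_le[OF inj_on_split_occurrence[of a] _ finite_subset_pairs])
    (auto intro: split_occurrence_in_subset_pairs)

lemma occ_block_word_less:
  assumes inv: "i < j" "j < length w" "w ! i = (\<not>x)" "w ! j = x"
    and ab: "a \<ge> 1" "b \<ge> 1" "a \<le> card (positions w x)" "b \<le> card (positions w (\<not>x))"
  shows "occ (block_word a b x) w < (card (positions w x) choose a) * (card (positions w (\<not>x)) choose b)"
proof -
  have j: "j \<in> positions w x" and i: "i \<in> positions w (\<not>x)" using inv by (auto simp: positions_def)
  have "a - 1 \<le> card (positions w x - {j})" using ab(3) j by (simp add: card_Diff_singleton)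
  then obtain A where A: "A \<subseteq> positions w x - {j}" "card A = a - 1" "finite A"
    by (rule obtain_subset_with_card_n)
  have "b - 1 \<le> card (positions w (\<not>x) - {i})" using ab(4) i by (simp add: card_Diff_singleton)
  then obtain B where B: "B \<subseteq> positions w (\<not>x) - {i}" "card B = b - 1" "finite B"
    by (rule obtain_subset_with_card_n)
  have "j \<notin> A" "i \<notin> B" using A B by auto
  then have "card (insert j A) = a" "card (insert i B) = b" using A B ab(1,2) by auto
  then have missed: "(insert j A, insert i B) \<in> subset_pairs a b x w"
    using A B i j by (auto simp: subset_pairs_def)
  have "(insert j A, insert i B) \<notin> split_occurrence a ` occurrences (block_word a b x) w"
  proof
    assume "(insert j A, insert i B) \<in> split_occurrence a ` occurrences (block_word a b x) w"
    then obtain ks where ks: "ks \<in> occurrences (block_word a b x) w"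
      and "j \<in> set (take a ks)" "i \<in> set (drop a ks)"
      by (auto simp: split_occurrence_def)
    then obtain s t where "s < length (take a ks)" "j = take a ks ! s"
      "t < length (drop a ks)" "i = drop a ks ! t"
      by (auto simp: in_set_conv_nth)
    moreover have "sorted_wrt (<) ks" using ks by (simp add: occurrences_def)
    ultimately have "j < i" by (auto simp: sorted_wrt_iff_nth_less)
    with inv show False by simp
  qed
  then have "split_occurrence a ` occurrences (block_word a b x) w \<subset> subset_pairs a b x w"
    using split_occurrence_in_subset_pairs missed by blast
  then have "card (split_occurrence a ` occurrences (block_word a b x) w) < card (subset_pairs a b x w)"
    by (rule psubset_card_mono[OF finite_subset_pairs])
  then show ?thesis
    by (simp add: occ_eq_card_occurrences card_image[OF inj_on_split_occurrence] card_subset_pairs)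
qed

lemma occ_block_word_block_word:
  "occ (block_word a b x) (block_word m k x) = (m choose a) * (k choose b)"
proof (rule antisym)
  show "occ (block_word a b x) (block_word m k x) \<le> (m choose a) * (k choose b)"
    using occ_block_word_le[of a b x "block_word m k x"]
    by (simp add: positions_block_word_fst positions_block_word_snd)
next
  let ?P = "subset_pairs a b x (block_word m k x)"
  define join where "join = (\<lambda>(A, B). sorted_list_of_set A @ sorted_list_of_set (B :: nat set))"
  have mem: "A \<subseteq> {..<m}" "card A = a" "B \<subseteq> {m..<m+k}" "card B = b" "finite A" "finite B"
    if "(A, B) \<in> ?P" for A B
    using that by (auto simp: subset_pairs_def positions_block_word_fst positions_block_word_snd
        intro: finite_subset)
  have inj: "inj_on join ?P"
  proof (rule inj_onI)
    fix u v assume "u \<in> ?P" "v \<in> ?P" "join u = join v"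
    moreover obtain A B C D where "u = (A, B)" "v = (C, D)" by (cases u, cases v)
    ultimately show "u = v"
      using mem by (auto simp: join_def append_eq_append_conv)
        (metis sorted_list_of_set.set_sorted_key_list_of_set)+
  qed
  moreover have into: "join ` ?P \<subseteq> occurrences (block_word a b x) (block_word m k x)"
  proof
    fix t assume "t \<in> join ` ?P"
    then obtain A B where AB: "(A, B) \<in> ?P" and t: "t = sorted_list_of_set A @ sorted_list_of_set B"
      by (auto simp: join_def)
    note mem = mem[OF AB]
    let ?LA = "sorted_list_of_set A" and ?LB = "sorted_list_of_set B"
    have LA: "length ?LA = a" "set ?LA = A" and LB: "length ?LB = b" "set ?LB = B" using mem by auto
    have "sorted_wrt (<) t"
      unfolding t using mem by (auto simp: sorted_wrt_append subset_iff intro: less_le_trans)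
    moreover have "t ! j < m + k \<and> block_word m k x ! (t ! j) = block_word a b x ! j"
      if "j < a + b" for j
    proof (cases "j < a")
      case True
      then have "t ! j \<in> A" using LA nth_mem by (metis t nth_append)
      then show ?thesis using mem True that by (auto simp: nth_block_word)
    next
      case False
      then have "t ! j \<in> B" using LA LB that nth_mem
        by (metis t nth_append add_diff_inverse_nat less_diff_conv2 not_le nat_le_linear add.commute)
      then show ?thesis using mem False that by (auto simp: nth_block_word)
    qed
    ultimately show "t \<in> occurrences (block_word a b x) (block_word m k x)"
      using LA LB by (simp add: occurrences_def t)
  qed
  ultimately show "(m choose a) * (k choose b) \<le> occ (block_word a b x) (block_word m k x)"
    using card_inj_on_le[OF inj into finite_occurrences] card_subset_pairs[of a b x "block_word m k x"]
    by (simp add: occ_eq_card_occurrences positions_block_word_fst positions_block_word_snd)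
qed

lemma length_eq_card_positions: "length w = card (positions w x) + card (positions w (\<not>x))"
proof -
  have "positions w x \<union> positions w (\<not>x) = {..<length w}" "positions w x \<inter> positions w (\<not>x) = {}"
    by (auto simp: positions_def)
  then show ?thesis by (metis card_Un_disjoint finite_positions card_lessThan)
qed

lemma optimal_block_word_no_inversion:
  assumes "optimal (block_word a b x) w" "a \<ge> 1" "b \<ge> 1"
    and "a \<le> card (positions w x)" "b \<le> card (positions w (\<not>x))"
    and "i < j" "j < length w" "w ! i = (\<not>x)" "w ! j = x"
  shows False
proof -
  let ?m = "card (positions w x)" and ?k = "card (positions w (\<not>x))"
  have "occ (block_word a b x) w < (?m choose a) * (?k choose b)"
    using assms by (intro occ_block_word_less) auto
  also have "\<dots> = occ (block_word a b x) (block_word ?m ?k x)"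
    by (rule occ_block_word_block_word[symmetric])
  also have "\<dots> \<le> occ (block_word a b x) w"
    using assms(1) length_eq_card_positions by (intro optimal_occ_ge) auto
  finally show False by simp
qed

theorem mainTheorem9:
  fixes p w :: "bool list" and n :: nat
  assumes "runs p = 2"
    and "n \<ge> length p"
    and "length w = n"
    and "optimal p w"
  shows "runs w = 2"
proof -
  obtain x a b where ab: "a \<ge> 1" "b \<ge> 1" and p: "p = block_word a b x"
    using runs_eq_2_imp_block_word[OF assms(1)] by blast
  have "0 < occ p w" using optimal_occ_pos assms(2-4) by simp
  then have "0 < (card (positions w x) choose a) * (card (positions w (\<not>x)) choose b)"
    using occ_block_word_le p by (metis less_le_trans)
  then have counts: "a \<le> card (positions w x)" "b \<le> card (positions w (\<not>x))" by auto
  obtain m k where w: "w = block_word m k x"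
    using no_inversion_imp_block_word optimal_block_word_no_inversion[OF _ ab counts]
      assms(4) p by metis
  have "m \<ge> 1" "k \<ge> 1"
    using counts ab by (auto simp: w positions_block_word_fst positions_block_word_snd)
  then show ?thesis unfolding w by (rule runs_block_word)
qed

end
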